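(* An optimal digraph has no stable set of size at least $3$.
   Context: Digraphs are finite, loopless, with at most one edge $uv$ per ordered pair. A set $X$ of vertices is stable if $uv\notin E(G)$ for all $u,v\in X$. A digraph is $2$-free if no distinct $u,v$ have both $uv,vu$ as edges. A circular interval digraph is a digraph together with a fixed arrangement of its vertices in a circle such that for all distinct $u,v,w$ in clockwise order with $uw\in E(G)$, also $uv,vw\in E(G)$. For distinct $u,v$, $d(u,v) = 1 + |\{w: u,w,v \text{ distinct, in clockwise order}\}|$; this is the length of the ordered pair $uv$. A non-edge is an ordered pair $(u,v)$ of distinct vertices with neither $uv$ nor $vu$ an edge; its length is $d(u,v)$. $\xi(G)$ is the number of pairs $(uv,(w,x))$ with $uv\in E(G)$, $(w,x)$ a non-edge, $d(u,v)>d(w,x)$. $\tilde P_3(G)$ is the number of triples $(a,b,c)$ of distinct vertices with $ab,bc\in E(G)$ and $ac,ca\notin E(G)$. For fixed $n\ge 4$, $G$ is optimal if it is a $2$-free circular interval digraph on $n$ vertices maximizing $\tilde P_3$ among all such digraphs and, subject to this, minimizing $\xi(G)$. *)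

theory Defs
  imports Main
begin

text \<open>Digraphs on the vertex set {0..<n}; the circular arrangement is the
 fixed clockwise order 0,1,...,n-1 (every arranged digraph is isomorphic to one
 of these, and all notions below are invariant under such relabelling).\<close>

definition digraph :: "nat \<Rightarrow> (nat \<times> nat) set \<Rightarrow> bool" where
  "digraph n E \<longleftrightarrow> E \<subseteq> {0..<n} \<times> {0..<n} \<and> (\<forall>u. (u, u) \<notin> E)"

definition two_free :: "(nat \<times> nat) set \<Rightarrow> bool" where
  "two_free E \<longleftrightarrow> (\<forall>u v. u \<noteq> v \<longrightarrow> \<not> ((u, v) \<in> E \<and> (v, u) \<in> E))"

definition cw :: "nat \<Rightarrow> nat \<Rightarrow> nat \<Rightarrow> nat \<Rightarrow> bool" where
  "cw n u v w \<longleftrightarrow> u < n \<and> v < n \<and> w < n \<and> u \<noteq> v \<and> v \<noteq> w \<and> u \<noteq> w \<and>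
     (int v - int u) mod int n < (int w - int u) mod int n"

definition circ_interval :: "nat \<Rightarrow> (nat \<times> nat) set \<Rightarrow> bool" where
  "circ_interval n E \<longleftrightarrow> digraph n E \<and>
     (\<forall>u v w. cw n u v w \<and> (u, w) \<in> E \<longrightarrow> (u, v) \<in> E \<and> (v, w) \<in> E)"

definition dist_cw :: "nat \<Rightarrow> nat \<Rightarrow> nat \<Rightarrow> nat" where
  "dist_cw n u v = 1 + card {w. cw n u w v}"

definition non_edge :: "nat \<Rightarrow> (nat \<times> nat) set \<Rightarrow> nat \<times> nat \<Rightarrow> bool" where
  "non_edge n E p \<longleftrightarrow> fst p < n \<and> snd p < n \<and> fst p \<noteq> snd p \<and>
     p \<notin> E \<and> (snd p, fst p) \<notin> E"

definition xi :: "nat \<Rightarrow> (nat \<times> nat) set \<Rightarrow> nat" where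
  "xi n E = card {(e, f). e \<in> E \<and> non_edge n E f \<and>
      dist_cw n (fst e) (snd e) > dist_cw n (fst f) (snd f)}"

definition P3t :: "nat \<Rightarrow> (nat \<times> nat) set \<Rightarrow> nat" where
  "P3t n E = card {(a, b, c). a < n \<and> b < n \<and> c < n \<and> a \<noteq> b \<and> b \<noteq> c \<and> a \<noteq> c \<and>
      (a, b) \<in> E \<and> (b, c) \<in> E \<and> (a, c) \<notin> E \<and> (c, a) \<notin> E}"

definition admissible :: "nat \<Rightarrow> (nat \<times> nat) set \<Rightarrow> bool" where
  "admissible n E \<longleftrightarrow> two_free E \<and> circ_interval n E"

definition optimal :: "nat \<Rightarrow> (nat \<times> nat) set \<Rightarrow> bool" where
  "optimal n E \<longleftrightarrow> admissible n E \<and>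
     (\<forall>E'. admissible n E' \<longrightarrow> P3t n E' \<le> P3t n E) \<and>
     (\<forall>E'. admissible n E' \<and> P3t n E' = P3t n E \<longrightarrow> xi n E \<le> xi n E')"

definition stable :: "(nat \<times> nat) set \<Rightarrow> nat set \<Rightarrow> bool" where
  "stable E X \<longleftrightarrow> (\<forall>u\<in>X. \<forall>v\<in>X. (u, v) \<notin> E)"

end

theory Submission
  imports Defs
begin

text \<open>
  An optimal digraph admits no admissible digraph with more induced 2-paths, nor one with as
  many and smaller \<open>\<xi>\<close>. After a rotation a stable triple is \<open>0 < x < Y\<close>.

  If a vertex \<open>t\<close> of some stable triple is a sink, the digraph can be improved: if some edge
  spans a vertex, adding the non-edge from \<open>t\<close> to its successor keeps all 2-paths and lowers
  \<open>\<xi>\<close>; otherwise every edge joins consecutive vertices and one more such edge creates a 2-path.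

  Call \<open>0 < s < Y\<close> detached if it is nonadjacent to \<open>0\<close> and \<open>Y\<close>; detached vertices form an
  interval containing \<open>x\<close>. Let \<open>t\<close> be the least detached vertex for which the edge to the first
  non-out-neighbour \<open>v\<close> after it can be added, and \<open>t' \<le> t\<close> the greatest detached vertex for
  which the edge from the last non-in-neighbour \<open>u\<close> before it can be added. Propagating through
  the vertices between them gives \<open>N\<^sup>+(t) \<subseteq> N\<^sup>+(t')\<close> and \<open>N\<^sup>-(t') \<subseteq> N\<^sup>-(t)\<close>. The two additions change
  the number of 2-paths by at least \<open>d\<^sup>+(v) + d\<^sup>-(t) - d\<^sup>+(t)\<close> and \<open>d\<^sup>-(u) + d\<^sup>+(t') - d\<^sup>-(t')\<close>; as
  neither may be positive, \<open>v\<close> is a sink, and \<open>v\<close> is detached or equal to \<open>Y\<close>, so it lies in a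
  stable triple.
\<close>

section \<open>Circular order\<close>

lemma int_diff_mod_eq:
  assumes "x < n" "y < n"
  shows "(int y - int x) mod int n = (if x \<le> y then int y - int x else int y - int x + int n)"
proof (cases "x \<le> y")
  case True
  then show ?thesis using assms by (simp add: mod_pos_pos_trivial)
next
  case False
  have "(int y - int x) mod int n = (int y - int x + int n) mod int n" by simp
  also have "\<dots> = int y - int x + int n" using assms False by (intro mod_pos_pos_trivial) auto
  finally show ?thesis using False by simp
qed

lemma cw_iff:
  "cw n u v w \<longleftrightarrow> u < n \<and> v < n \<and> w < n \<and> (u < v \<and> v < w \<or> v < w \<and> w < u \<or> w < u \<and> u < v)"
proof (cases "u < n \<and> v < n \<and> w < n")
  case True
  then show ?thesis unfolding cw_def by (auto simp: int_diff_mod_eq)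
qed (auto simp: cw_def)

lemma cw_lt: "cw n a b c \<Longrightarrow> a < n \<and> b < n \<and> c < n"
  by (simp add: cw_def)

lemma not_cw_Suc_mod: "a < n \<Longrightarrow> \<not> cw n a x (Suc a mod n)"
  by (cases "Suc a < n") (auto simp: cw_iff mod_Suc)

lemma Suc_mod_if_not_cw:
  assumes "a < n" "b < n" "a \<noteq> b" "\<And>w. \<not> cw n a w b"
  shows "b = Suc a mod n"
proof (rule ccontr)
  assume "b \<noteq> Suc a mod n"
  then have "cw n a (Suc a mod n) b"
    using assms(1-3) by (cases "Suc a < n") (auto simp: cw_iff mod_Suc)
  then show False using assms(4) by blast
qed

lemma dist_cw_eq_1_iff: "dist_cw n a b = 1 \<longleftrightarrow> (\<nexists>w. cw n a w b)"
proof -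
  have "finite {w. cw n a w b}" by (rule finite_subset[of _ "{..<n}"]) (auto simp: cw_def)
  then show ?thesis unfolding dist_cw_def by auto
qed

lemma add_mod_neq_self:
  fixes x n k :: nat
  assumes "x < n" "0 < k" "k < n"
  shows "(x + k) mod n \<noteq> x"
proof (cases "x + k < n")
  case False
  then have "(x + k) mod n = x + k - n" using assms by (simp add: le_mod_geq)
  then show ?thesis using assms False by auto
qed (use assms in simp)

lemma cyclic_rise:
  assumes "t < n" "a < n" "\<not> P t" "P a"
  obtains w where "w < n" "\<not> P w" "P (Suc w mod n)"
proof -
  have "P ((t + (a + n - t)) mod n)" using assms by simp
  then obtain k where k: "P ((t + k) mod n)" and least: "\<And>j. j < k \<Longrightarrow> \<not> P ((t + j) mod n)"
    using exists_least_iff[of "\<lambda>k. P ((t + k) mod n)"] by blast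
  have "k \<noteq> 0" using k assms(1,3) by (metis add_0_right mod_less)
  then have "Suc ((t + (k - 1)) mod n) mod n = (t + k) mod n" by (simp add: mod_Suc_eq)
  then show ?thesis
    using that[of "(t + (k - 1)) mod n"] k least[of "k - 1"] \<open>k \<noteq> 0\<close> assms(1) by simp
qed

lemma three_increasing_elements:
  fixes X :: "nat set"
  assumes "3 \<le> card X"
  obtains a b c where "a < b" "b < c" "a \<in> X" "b \<in> X" "c \<in> X"
proof -
  obtain T where "T \<subseteq> X" "card T = 3"
    using assms obtain_subset_with_card_n by metis
  then obtain x y z where "T = {x, y, z}" "x \<noteq> y" "y \<noteq> z" "x \<noteq> z"
    by (auto simp: card_3_iff)
  then have "x \<in> X" "y \<in> X" "z \<in> X" "x \<noteq> y" "y \<noteq> z" "x \<noteq> z"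
    using \<open>T \<subseteq> X\<close> by auto
  then show ?thesis
    using that by (cases x y rule: linorder_cases; cases y z rule: linorder_cases;
        cases x z rule: linorder_cases) blast+
qed

section \<open>Counting 2-paths and crossings\<close>

lemma card_eq_if_bij_betw_invariant:
  assumes "bij_betw f A A" "S \<subseteq> A" "T \<subseteq> A" "\<And>x. x \<in> A \<Longrightarrow> f x \<in> T \<longleftrightarrow> x \<in> S"
  shows "card T = card S"
proof -
  have "T = f ` S"
  proof
    show "f ` S \<subseteq> T" using assms(2,4) by blast
    show "T \<subseteq> f ` S"
    proof
      fix y assume "y \<in> T"
      then obtain x where "x \<in> A" "y = f x"
        using assms(1,3) unfolding bij_betw_def by blast
      then show "y \<in> f ` S" using assms(4) \<open>y \<in> T\<close> by blast
    qed
  qed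
  moreover have "inj_on f S"
    using assms(1,2) bij_betw_imp_inj_on inj_on_subset by blast
  ultimately show ?thesis by (simp add: card_image)
qed

lemma card_le_of_exchange:
  assumes "finite T" "finite T'" "finite L" "T - L \<subseteq> T'" "N \<subseteq> T'" "N \<inter> T = {}"
  shows "card T + card N \<le> card T' + card L"
proof -
  have "card T \<le> card ((T - L) \<union> L)" using assms(1,3) by (intro card_mono) auto
  also have "\<dots> \<le> card (T - L) + card L" by (rule card_Un_le)
  finally have "card T \<le> card (T - L) + card L" .
  moreover have "card (T - L) + card N = card ((T - L) \<union> N)"
    using assms(1,2,5,6) finite_subset by (intro card_Un_disjoint[symmetric]) auto
  moreover have "card ((T - L) \<union> N) \<le> card T'" using assms(2,4,5) by (intro card_mono) auto
  ultimately show ?thesis by linarith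
qed

definition P3_triples :: "nat \<Rightarrow> (nat \<times> nat) set \<Rightarrow> (nat \<times> nat \<times> nat) set" where
  "P3_triples n E = {(a, b, c). a < n \<and> b < n \<and> c < n \<and> a \<noteq> b \<and> b \<noteq> c \<and> a \<noteq> c \<and>
      (a, b) \<in> E \<and> (b, c) \<in> E \<and> (a, c) \<notin> E \<and> (c, a) \<notin> E}"

lemma P3t_eq_card: "P3t n E = card (P3_triples n E)"
  unfolding P3t_def P3_triples_def by simp

lemma P3_triples_subset: "P3_triples n E \<subseteq> {..<n} \<times> {..<n} \<times> {..<n}"
  unfolding P3_triples_def by auto

lemma finite_P3_triples: "finite (P3_triples n E)"
  using P3_triples_subset finite_subset by blast

definition xi_pairs :: "nat \<Rightarrow> (nat \<times> nat) set \<Rightarrow> ((nat \<times> nat) \<times> (nat \<times> nat)) set" where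
  "xi_pairs n E = {(e, f). e \<in> E \<and> non_edge n E f \<and>
      dist_cw n (fst e) (snd e) > dist_cw n (fst f) (snd f)}"

lemma xi_eq_card: "xi n E = card (xi_pairs n E)"
  unfolding xi_def xi_pairs_def by simp

lemma xi_pairs_subset:
  "E \<subseteq> {..<n} \<times> {..<n} \<Longrightarrow> xi_pairs n E \<subseteq> ({..<n} \<times> {..<n}) \<times> ({..<n} \<times> {..<n})"
  unfolding xi_pairs_def non_edge_def by auto

section \<open>Rotations\<close>

definition rot :: "nat \<Rightarrow> nat \<Rightarrow> nat \<Rightarrow> nat" where
  "rot n k x = (x + k) mod n"

definition rotE :: "nat \<Rightarrow> nat \<Rightarrow> (nat \<times> nat) set \<Rightarrow> (nat \<times> nat) set" where
  "rotE n k E = map_prod (rot n k) (rot n k) ` E"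

lemma rot_cancel:
  assumes "x < n" "(j + k) mod n = 0"
  shows "rot n k (rot n j x) = x"
proof -
  have "rot n k (rot n j x) = (x + (j + k)) mod n"
    by (simp add: rot_def mod_add_left_eq add.assoc)
  also have "\<dots> = (x + (j + k) mod n) mod n" by (simp add: mod_add_right_eq)
  finally show ?thesis using assms by simp
qed

lemma add_diff_mod_self:
  assumes "0 < n"
  shows "(k + (n - k mod n)) mod n = (0::nat)"
proof -
  have "k mod n \<le> n" using assms by (simp add: less_imp_le)
  then have "k + (n - k mod n) = k div n * n + n"
    using div_mult_mod_eq[of k n] by linarith
  then show ?thesis by simp
qed

lemma bij_betw_rot: "bij_betw (rot n k) {..<n} {..<n}"
proof (rule bij_betw_byWitness[where f' = "rot n (n - k mod n)"])
  show "\<forall>x\<in>{..<n}. rot n (n - k mod n) (rot n k x) = x"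
    using rot_cancel add_diff_mod_self by (simp add: gr_implies_not0)
  show "\<forall>y\<in>{..<n}. rot n k (rot n (n - k mod n) y) = y"
  proof
    fix y assume "y \<in> {..<n}"
    moreover have "(n - k mod n + k) mod n = 0"
      using add_diff_mod_self[of n k] \<open>y \<in> {..<n}\<close> by (simp add: add.commute)
    ultimately show "rot n k (rot n (n - k mod n) y) = y" by (simp add: rot_cancel)
  qed
qed (auto simp: rot_def)

lemma rot_lt: "x < n \<Longrightarrow> rot n k x < n"
  by (simp add: rot_def)

lemma rot_eq_iff: "x < n \<Longrightarrow> y < n \<Longrightarrow> rot n k x = rot n k y \<longleftrightarrow> x = y"
  using bij_betw_rot[of n k] by (auto dest: bij_betw_imp_inj_on simp: inj_on_def)

lemma rot_cases:
  assumes "u < n"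
  obtains a where "a < n" "u = rot n k a"
  using bij_betw_rot[of n k] assms unfolding bij_betw_def by (metis imageE lessThan_iff)

lemma cw_rot:
  assumes "a < n" "b < n" "c < n"
  shows "cw n (rot n k a) (rot n k b) (rot n k c) \<longleftrightarrow> cw n a b c"
proof -
  have diff: "(int (rot n k y) - int (rot n k x)) mod int n = (int y - int x) mod int n" for x y
  proof -
    have "(int (rot n k y) - int (rot n k x)) mod int n
        = ((int y + int k) mod int n - (int x + int k) mod int n) mod int n"
      by (simp add: rot_def of_nat_mod)
    also have "\<dots> = (int y - int x) mod int n" by (simp add: mod_diff_eq)
    finally show ?thesis .
  qed
  show ?thesis unfolding cw_def diff using assms by (simp add: rot_lt rot_eq_iff)
qed

lemma rotE_subset: "rotE n k E \<subseteq> {..<n} \<times> {..<n}" if "E \<subseteq> {..<n} \<times> {..<n}"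
  using that by (auto simp: rotE_def rot_lt)

lemma mem_rotE_iff:
  assumes "E \<subseteq> {..<n} \<times> {..<n}" "a < n" "b < n"
  shows "(rot n k a, rot n k b) \<in> rotE n k E \<longleftrightarrow> (a, b) \<in> E"
  using assms by (force simp: rotE_def rot_eq_iff)

lemma dist_cw_rot:
  assumes "a < n" "b < n"
  shows "dist_cw n (rot n k a) (rot n k b) = dist_cw n a b"
proof -
  have "{w. cw n (rot n k a) w (rot n k b)} = rot n k ` {w. cw n a w b}"
  proof
    show "rot n k ` {w. cw n a w b} \<subseteq> {w. cw n (rot n k a) w (rot n k b)}"
      using assms cw_rot cw_lt by blast
    show "{w. cw n (rot n k a) w (rot n k b)} \<subseteq> rot n k ` {w. cw n a w b}"
    proof
      fix w assume w: "w \<in> {w. cw n (rot n k a) w (rot n k b)}"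
      then have "w < n" by (simp add: cw_lt)
      then obtain c where "c < n" "w = rot n k c" by (rule rot_cases)
      then show "w \<in> rot n k ` {w. cw n a w b}" using w assms cw_rot by auto
    qed
  qed
  moreover have "inj_on (rot n k) {w. cw n a w b}"
    by (auto simp: inj_on_def cw_def rot_eq_iff)
  ultimately show ?thesis unfolding dist_cw_def by (simp add: card_image)
qed

lemma P3t_rotE:
  assumes "E \<subseteq> {..<n} \<times> {..<n}"
  shows "P3t n (rotE n k E) = P3t n E"
  unfolding P3t_eq_card
proof (rule card_eq_if_bij_betw_invariant[OF _ P3_triples_subset P3_triples_subset])
  show "bij_betw (map_prod (rot n k) (map_prod (rot n k) (rot n k)))
      ({..<n} \<times> {..<n} \<times> {..<n}) ({..<n} \<times> {..<n} \<times> {..<n})"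
    by (intro bij_betw_map_prod bij_betw_rot)
  show "map_prod (rot n k) (map_prod (rot n k) (rot n k)) x \<in> P3_triples n (rotE n k E)
      \<longleftrightarrow> x \<in> P3_triples n E" if "x \<in> {..<n} \<times> {..<n} \<times> {..<n}" for x
    using that assms by (auto simp: P3_triples_def mem_rotE_iff rot_eq_iff rot_lt)
qed

lemma xi_rotE:
  assumes "E \<subseteq> {..<n} \<times> {..<n}"
  shows "xi n (rotE n k E) = xi n E"
  unfolding xi_eq_card
proof (rule card_eq_if_bij_betw_invariant[OF _ xi_pairs_subset[OF assms]
      xi_pairs_subset[OF rotE_subset[OF assms]]])
  let ?r = "map_prod (rot n k) (rot n k)"
  show "bij_betw (map_prod ?r ?r)
      (({..<n} \<times> {..<n}) \<times> ({..<n} \<times> {..<n})) (({..<n} \<times> {..<n}) \<times> ({..<n} \<times> {..<n}))"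
    by (intro bij_betw_map_prod bij_betw_rot)
  show "map_prod ?r ?r x \<in> xi_pairs n (rotE n k E) \<longleftrightarrow> x \<in> xi_pairs n E"
    if "x \<in> ({..<n} \<times> {..<n}) \<times> ({..<n} \<times> {..<n})" for x
    using that assms
    by (auto simp: xi_pairs_def non_edge_def mem_rotE_iff rot_eq_iff rot_lt dist_cw_rot)
qed

definition nonadj :: "(nat \<times> nat) set \<Rightarrow> nat \<Rightarrow> nat \<Rightarrow> bool" where
  "nonadj E a b \<longleftrightarrow> (a, b) \<notin> E \<and> (b, a) \<notin> E"

lemma nonadj_sym: "nonadj E a b \<longleftrightarrow> nonadj E b a"
  by (auto simp: nonadj_def)

definition improvable :: "nat \<Rightarrow> (nat \<times> nat) set \<Rightarrow> bool" where
  "improvable n E \<longleftrightarrow> (\<exists>E'. admissible n E' \<and>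
     (P3t n E < P3t n E' \<or> P3t n E' = P3t n E \<and> xi n E' < xi n E))"

lemma optimal_not_improvable: "optimal n E \<Longrightarrow> \<not> improvable n E"
  unfolding optimal_def improvable_def by (meson leD)

lemma improvable_if_rotE_improvable:
  assumes "E \<subseteq> {..<n} \<times> {..<n}" "improvable n (rotE n k E)"
  shows "improvable n E"
  using assms unfolding improvable_def by (simp add: P3t_rotE xi_rotE)

definition has_long_edge :: "nat \<Rightarrow> (nat \<times> nat) set \<Rightarrow> bool" where
  "has_long_edge n E \<longleftrightarrow> (\<exists>a b w. (a, b) \<in> E \<and> cw n a w b)"

lemma improvable_empty:
  assumes "3 \<le> n"
  shows "improvable n {}"
proof -
  let ?E = "{(0, 1), (1, 2)} :: (nat \<times> nat) set"
  have "admissible n ?E"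
    using assms by (auto simp: admissible_def circ_interval_def digraph_def two_free_def cw_iff)
  moreover have "(0, 1, 2) \<in> P3_triples n ?E"
    using assms by (simp add: P3_triples_def)
  then have "0 < P3t n ?E"
    unfolding P3t_eq_card using finite_P3_triples card_gt_0_iff by blast
  moreover have "P3_triples n {} = {}"
    by (auto simp: P3_triples_def)
  then have "P3t n {} = 0"
    by (simp add: P3t_eq_card)
  ultimately show ?thesis unfolding improvable_def by auto
qed

section \<open>Sinks in stable triples\<close>

locale circ_digraph =
  fixes n :: nat and E :: "(nat \<times> nat) set"
  assumes admissible: "admissible n E"
begin

lemma digraph: "digraph n E"
  using admissible by (simp add: admissible_def circ_interval_def)

lemma edges_subset: "E \<subseteq> {..<n} \<times> {..<n}"
  using digraph by (auto simp: digraph_def)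

lemma edge_lt: "(a, b) \<in> E \<Longrightarrow> a < n \<and> b < n"
  using edges_subset by auto

lemma no_loop: "(u, u) \<notin> E"
  using digraph by (simp add: digraph_def)

lemma edge_asym: "(u, v) \<in> E \<Longrightarrow> (v, u) \<notin> E"
  using admissible no_loop[of u] by (cases "u = v") (auto simp: admissible_def two_free_def)

lemma edge_between:
  assumes "(a, c) \<in> E" "cw n a b c"
  shows "(a, b) \<in> E \<and> (b, c) \<in> E"
proof -
  have "circ_interval n E" using admissible by (simp add: admissible_def)
  then show ?thesis using assms unfolding circ_interval_def by blast
qed

lemma edge_between_forward:
  assumes "(a, c) \<in> E" "a < b" "b < c"
  shows "(a, b) \<in> E \<and> (b, c) \<in> E"
proof -
  have "cw n a b c" using assms edge_lt[OF assms(1)] by (simp add: cw_iff)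
  then show ?thesis using edge_between[OF assms(1)] by blast
qed

lemma edge_between_wrap:
  assumes "(a, c) \<in> E" "c < a" "b < c \<or> a < b" "b < n"
  shows "(a, b) \<in> E \<and> (b, c) \<in> E"
proof -
  have "cw n a b c" using assms edge_lt[OF assms(1)] by (auto simp: cw_iff)
  then show ?thesis using edge_between[OF assms(1)] by blast
qed

lemma finite_out: "finite {c. (v, c) \<in> E}"
  by (rule finite_subset[of _ "{..<n}"]) (auto dest: edge_lt)

lemma finite_in: "finite {a. (a, v) \<in> E}"
  by (rule finite_subset[of _ "{..<n}"]) (auto dest: edge_lt)

lemma admissible_insert_edge:
  assumes "u < n" "v < n" "u \<noteq> v" "(v, u) \<notin> E"
    and between: "\<And>w. cw n u w v \<Longrightarrow> (u, w) \<in> E \<and> (w, v) \<in> E"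
  shows "admissible n (insert (u, v) E)"
proof -
  have "digraph n (insert (u, v) E)"
    using assms(1-3) edges_subset no_loop unfolding digraph_def by auto
  moreover have "two_free (insert (u, v) E)"
    using assms(4) edge_asym unfolding two_free_def by blast
  moreover have "(a, b) \<in> insert (u, v) E \<and> (b, c) \<in> insert (u, v) E"
    if "cw n a b c" "(a, c) \<in> insert (u, v) E" for a b c
    using that between edge_between by blast
  ultimately show ?thesis
    unfolding admissible_def circ_interval_def by blast
qed

text \<open>The new edge \<open>uv\<close> destroys only the 2-paths \<open>u b v\<close> and \<open>v b u\<close>, and creates the 2-paths
  \<open>u v c\<close> and \<open>a u v\<close>.\<close>

lemma P3t_insert_edge:
  assumes "u < n" "v < n" "u \<noteq> v" "(u, v) \<notin> E" "(v, u) \<notin> E"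
  shows "P3t n E + card {c. (v, c) \<in> E \<and> nonadj E u c} + card {a. (a, u) \<in> E \<and> nonadj E a v}
    \<le> P3t n (insert (u, v) E) + card {b. (u, b) \<in> E \<and> (b, v) \<in> E}
      + card {b. (v, b) \<in> E \<and> (b, u) \<in> E}"
proof -
  define Out where "Out = {c. (v, c) \<in> E \<and> nonadj E u c}"
  define In where "In = {a. (a, u) \<in> E \<and> nonadj E a v}"
  define Via1 where "Via1 = {b. (u, b) \<in> E \<and> (b, v) \<in> E}"
  define Via2 where "Via2 = {b. (v, b) \<in> E \<and> (b, u) \<in> E}"
  define Lost where "Lost = (\<lambda>b. (u, b, v)) ` Via1 \<union> (\<lambda>b. (v, b, u)) ` Via2"
  define New where "New = (\<lambda>c. (u, v, c)) ` Out \<union> (\<lambda>a. (a, u, v)) ` In"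
  have fin: "finite Out" "finite In" "finite Via1" "finite Via2"
    unfolding Out_def In_def Via1_def Via2_def
    by (auto intro: finite_subset[OF _ finite_out] finite_subset[OF _ finite_in])
  have "card (P3_triples n E) + card New \<le> card (P3_triples n (insert (u, v) E)) + card Lost"
  proof (rule card_le_of_exchange[OF finite_P3_triples finite_P3_triples])
    show "finite Lost" using fin by (simp add: Lost_def)
    show "P3_triples n E - Lost \<subseteq> P3_triples n (insert (u, v) E)"
      unfolding Lost_def P3_triples_def Via1_def Via2_def by auto
    show "New \<subseteq> P3_triples n (insert (u, v) E)"
      using assms edge_lt no_loop unfolding New_def P3_triples_def Out_def In_def nonadj_def by auto
    show "New \<inter> P3_triples n E = {}"
      using assms(4) unfolding New_def P3_triples_def by auto
  qed
  moreover have "card New = card Out + card In"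
    using assms(3) fin unfolding New_def
    by (subst card_Un_disjoint) (auto simp: card_image inj_on_def)
  moreover have "card Lost \<le> card Via1 + card Via2"
    unfolding Lost_def using card_Un_le card_image_le[OF fin(3)] card_image_le[OF fin(4)]
    by (rule order_trans[OF _ add_mono])
  ultimately show ?thesis
    unfolding P3t_eq_card Out_def In_def Via1_def Via2_def by linarith
qed

lemma P3t_insert_edge_mono:
  assumes "u < n" "v < n" "u \<noteq> v" "(u, v) \<notin> E" "(v, u) \<notin> E"
    and "\<And>b. (u, b) \<in> E \<Longrightarrow> (b, v) \<notin> E" "\<And>b. (v, b) \<in> E \<Longrightarrow> (b, u) \<notin> E"
  shows "P3t n E + card {c. (v, c) \<in> E \<and> nonadj E u c} \<le> P3t n (insert (u, v) E)"
proof -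
  have "{b. (u, b) \<in> E \<and> (b, v) \<in> E} = {}" "{b. (v, b) \<in> E \<and> (b, u) \<in> E} = {}"
    using assms(6,7) by auto
  from P3t_insert_edge[OF assms(1-5), unfolded this] show ?thesis by simp
qed

lemma xi_insert_short_non_edge:
  assumes "non_edge n E (u, v)" "dist_cw n u v = 1" "has_long_edge n E"
  shows "xi n (insert (u, v) E) < xi n E"
proof -
  let ?E' = "insert (u, v) E"
  obtain g1 g2 w where g: "(g1, g2) \<in> E" "cw n g1 w g2"
    using assms(3) by (auto simp: has_long_edge_def)
  have "xi_pairs n ?E' \<subseteq> xi_pairs n E"
  proof
    fix y assume "y \<in> xi_pairs n ?E'"
    then obtain e f where y: "y = (e, f)" "e \<in> ?E'" "non_edge n ?E' f"
      and longer: "dist_cw n (fst f) (snd f) < dist_cw n (fst e) (snd e)"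
      by (auto simp: xi_pairs_def)
    have "e \<noteq> (u, v)" using longer assms(2) by (auto simp: dist_cw_def)
    then show "y \<in> xi_pairs n E" using y longer by (auto simp: xi_pairs_def non_edge_def)
  qed
  moreover have "((g1, g2), (u, v)) \<in> xi_pairs n E - xi_pairs n ?E'"
  proof -
    have "dist_cw n g1 g2 \<noteq> 1" unfolding dist_cw_eq_1_iff using g(2) by blast
    then have "dist_cw n u v < dist_cw n g1 g2" using assms(2) by (simp add: dist_cw_def)
    then show ?thesis using g(1) assms(1) by (simp add: xi_pairs_def non_edge_def)
  qed
  moreover have "finite (xi_pairs n E)"
    using xi_pairs_subset[OF edges_subset] finite_subset by blast
  ultimately have "xi_pairs n ?E' \<subset> xi_pairs n E" "finite (xi_pairs n E)" by blast+
  then show ?thesis unfolding xi_eq_card by (simp add: psubset_card_mono)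
qed

lemma no_return_to_0:
  assumes pq: "0 < p" "p < q" "q < n"
    and nonadj: "nonadj E 0 p" "nonadj E 0 q" "nonadj E p q"
  shows "(1, 0) \<notin> E" and "(1, b) \<in> E \<Longrightarrow> (b, 0) \<notin> E"
proof
  assume e: "(1, 0) \<in> E"
  have "p = 1 \<or> cw n 1 p 0" using pq by (auto simp: cw_iff)
  then have "(p, 0) \<in> E" using e edge_between[OF e, of p] by blast
  then show False using nonadj(1) by (simp add: nonadj_def)
next
  assume b1: "(1, b) \<in> E"
  show "(b, 0) \<notin> E"
  proof
    assume b0: "(b, 0) \<in> E"
    have "b \<noteq> 0" using b0 no_loop by metis
    have "b \<noteq> q" "b < n" using b0 nonadj(2) edge_lt[OF b0] by (auto simp: nonadj_def)
    show False
    proof (cases "b < q")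
      case True
      then have "cw n b q 0" using \<open>b \<noteq> 0\<close> pq by (auto simp: cw_iff)
      then show False using edge_between[OF b0, of q] nonadj(2) by (simp add: nonadj_def)
    next
      case False
      then have qb: "q < b" using \<open>b \<noteq> q\<close> by simp
      have "(p, b) \<in> E"
      proof (cases "p = 1")
        case False
        then show ?thesis using edge_between_forward[OF b1, of p] pq qb by simp
      qed (use b1 in simp)
      then have "(p, q) \<in> E" using edge_between_forward[of p b q] pq qb by simp
      then show False using nonadj(3) by (simp add: nonadj_def)
    qed
  qed
qed

lemma improvable_if_long_edge_sink_at_0:
  assumes pq: "0 < p" "p < q" "q < n"
    and nonadj: "nonadj E 0 p" "nonadj E 0 q" "nonadj E p q"
    and sink: "\<And>c. (0, c) \<notin> E" and long: "has_long_edge n E"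
  shows "improvable n E"
proof -
  note no_return = no_return_to_0[OF pq nonadj]
  have n1: "1 < n" using pq by simp
  have "dist_cw n 0 1 = 1"
    unfolding dist_cw_eq_1_iff using not_cw_Suc_mod[of 0 n] n1 by simp
  moreover have "non_edge n E (0, 1)" using n1 sink no_return(1) by (simp add: non_edge_def)
  ultimately have "xi n (insert (0, 1) E) < xi n E"
    using xi_insert_short_non_edge long by blast
  moreover have "admissible n (insert (0, 1) E)"
    using n1 no_return(1) not_cw_Suc_mod[of 0 n] by (intro admissible_insert_edge) auto
  moreover have "P3t n E \<le> P3t n (insert (0, 1) E)"
    using P3t_insert_edge_mono[of 0 1] n1 sink no_return by simp
  ultimately show ?thesis unfolding improvable_def by (auto simp: le_less)
qed

lemma edge_succ_if_no_long_edge: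
  assumes "\<not> has_long_edge n E" "(a, b) \<in> E"
  shows "b = Suc a mod n"
proof -
  have "a \<noteq> b" using assms(2) no_loop by metis
  then show ?thesis
    using Suc_mod_if_not_cw[of a n b] assms edge_lt by (auto simp: has_long_edge_def)
qed

lemma short_edges_rise:
  assumes "\<not> has_long_edge n E" "E \<noteq> {}" "t < n" "\<And>c. (t, c) \<notin> E"
  obtains w where "w < n" "(w, Suc w mod n) \<notin> E" "(Suc w mod n, Suc (Suc w) mod n) \<in> E"
proof -
  obtain a b where "(a, b) \<in> E" using assms(2) by auto
  then have "a < n" "(a, Suc a mod n) \<in> E"
    using edge_lt edge_succ_if_no_long_edge[OF assms(1)] by auto
  then show ?thesis
    using cyclic_rise[of t n a "\<lambda>i. (i, Suc i mod n) \<in> E"] assms(3,4) that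
    by (auto simp: mod_Suc_eq)
qed

lemma improvable_if_short_edges:
  assumes n: "4 \<le> n" and short: "\<not> has_long_edge n E"
    and sink: "t < n" "\<And>c. (t, c) \<notin> E"
  shows "improvable n E"
proof (cases "E = {}")
  case True
  then show ?thesis using improvable_empty n by simp
next
  case False
  note succ = edge_succ_if_no_long_edge[OF short]
  obtain w where w: "w < n" "(w, Suc w mod n) \<notin> E"
    and w12: "(Suc w mod n, Suc (Suc w) mod n) \<in> E"
    using short_edges_rise[OF short False sink] by blast
  define w1 where "w1 = Suc w mod n"
  define w2 where "w2 = Suc (Suc w) mod n"
  have "w1 \<noteq> w" "w2 \<noteq> w" "Suc (Suc (Suc w)) mod n \<noteq> w"
    using add_mod_neq_self[of w n 1] add_mod_neq_self[of w n 2] add_mod_neq_self[of w n 3] w n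
    unfolding w1_def w2_def by (simp_all add: eval_nat_numeral)
  have w12': "(w1, w2) \<in> E" using w12 unfolding w1_def w2_def .
  have no_w1_w: "(w1, w) \<notin> E"
    using succ[of w1 w] \<open>w2 \<noteq> w\<close> unfolding w1_def w2_def by (auto simp: mod_Suc_eq)
  have no_w2_w: "(w2, w) \<notin> E"
    using succ[of w2 w] \<open>Suc (Suc (Suc w)) mod n \<noteq> w\<close> unfolding w2_def
    by (auto simp: mod_Suc_eq)
  have "(w, w2) \<notin> E"
    using succ[of w w2] no_loop[of w1] w12' unfolding w1_def by auto
  then have "w2 \<in> {c. (w1, c) \<in> E \<and> nonadj E w c}"
    using w12' no_w2_w unfolding nonadj_def by simp
  moreover have "finite {c. (w1, c) \<in> E \<and> nonadj E w c}"
    by (rule finite_subset[OF _ finite_out]) auto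
  ultimately have "0 < card {c. (w1, c) \<in> E \<and> nonadj E w c}"
    by (auto simp: card_gt_0_iff)
  moreover have "P3t n E + card {c. (w1, c) \<in> E \<and> nonadj E w c} \<le> P3t n (insert (w, w1) E)"
  proof (rule P3t_insert_edge_mono)
    show "(w1, b) \<in> E \<Longrightarrow> (b, w) \<notin> E" for b
      using succ[of w1 b] no_w2_w unfolding w1_def w2_def by (auto simp: mod_Suc_eq)
  qed (use w \<open>w1 \<noteq> w\<close> no_w1_w succ[of w] no_loop[of w1] in \<open>auto simp: w1_def\<close>)
  ultimately have "P3t n E < P3t n (insert (w, w1) E)"
    by linarith
  moreover have "admissible n (insert (w, w1) E)"
    using w \<open>w1 \<noteq> w\<close> no_w1_w not_cw_Suc_mod[of w n]
    by (intro admissible_insert_edge) (auto simp: w1_def)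
  ultimately show ?thesis unfolding improvable_def by blast
qed

lemma admissible_rotE: "admissible n (rotE n k E)"
proof -
  have sub: "rotE n k E \<subseteq> {..<n} \<times> {..<n}"
    using edges_subset by (rule rotE_subset)
  have mem: "(rot n k a, rot n k b) \<in> rotE n k E \<longleftrightarrow> (a, b) \<in> E" if "a < n" "b < n" for a b
    using mem_rotE_iff[OF edges_subset that] .
  have "(u, u) \<notin> rotE n k E" for u
  proof
    assume uu: "(u, u) \<in> rotE n k E"
    then have "u < n" using sub by auto
    then obtain a where "a < n" "u = rot n k a" by (rule rot_cases)
    then show False using uu mem no_loop by auto
  qed
  then have "digraph n (rotE n k E)"
    using sub unfolding digraph_def by auto
  moreover have "\<not> ((u, v) \<in> rotE n k E \<and> (v, u) \<in> rotE n k E)" for u v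
  proof
    assume uv: "(u, v) \<in> rotE n k E \<and> (v, u) \<in> rotE n k E"
    then have "u < n" "v < n" using sub by auto
    then obtain a b where "a < n" "u = rot n k a" "b < n" "v = rot n k b"
      by (metis rot_cases)
    then show False using uv mem edge_asym by auto
  qed
  then have "two_free (rotE n k E)"
    unfolding two_free_def by blast
  moreover have "(u, v) \<in> rotE n k E \<and> (v, w) \<in> rotE n k E"
    if uvw: "cw n u v w" "(u, w) \<in> rotE n k E" for u v w
  proof -
    obtain a b c where abc: "a < n" "b < n" "c < n"
      and uvw_eq: "u = rot n k a" "v = rot n k b" "w = rot n k c"
      using cw_lt[OF uvw(1)] by (metis rot_cases)
    have "cw n a b c" using uvw(1) cw_rot[OF abc] uvw_eq by simp
    moreover have "(a, c) \<in> E" using uvw(2) mem abc uvw_eq by simp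
    ultimately have "(a, b) \<in> E \<and> (b, c) \<in> E" by (rule edge_between[rotated])
    then show ?thesis using mem abc uvw_eq by simp
  qed
  ultimately show ?thesis
    unfolding admissible_def circ_interval_def by blast
qed

lemma nonadj_rotE_iff:
  "a < n \<Longrightarrow> b < n \<Longrightarrow> nonadj (rotE n k E) (rot n k a) (rot n k b) \<longleftrightarrow> nonadj E a b"
  using mem_rotE_iff[OF edges_subset] by (simp add: nonadj_def)

lemma has_long_edge_rotE:
  assumes "has_long_edge n E"
  shows "has_long_edge n (rotE n k E)"
proof -
  obtain a b w where abw: "(a, b) \<in> E" "cw n a w b"
    using assms by (auto simp: has_long_edge_def)
  then have "a < n" "b < n" "w < n" using edge_lt cw_lt by auto
  then show ?thesis using abw mem_rotE_iff[OF edges_subset] cw_rot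
    unfolding has_long_edge_def by blast
qed

lemma sink_rotE:
  assumes "t < n" "\<And>c. (t, c) \<notin> E"
  shows "(rot n k t, c) \<notin> rotE n k E"
proof
  assume "(rot n k t, c) \<in> rotE n k E"
  then obtain a b where "(a, b) \<in> E" "rot n k t = rot n k a" by (auto simp: rotE_def)
  then show False using rot_eq_iff[of a n t] edge_lt assms by metis
qed

lemma improvable_if_sink_in_stable_triple:
  assumes n: "4 \<le> n" and lt: "t < n" "p < n" "q < n" and neq: "t \<noteq> p" "t \<noteq> q" "p \<noteq> q"
    and nonadj: "nonadj E t p" "nonadj E t q" "nonadj E p q"
    and sink: "\<And>c. (t, c) \<notin> E"
  shows "improvable n E"
proof (cases "has_long_edge n E")
  case False
  then show ?thesis using improvable_if_short_edges n lt(1) sink by blast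
next
  case True
  let ?r = "rot n (n - t)" and ?F = "rotE n (n - t) E"
  interpret F: circ_digraph n ?F by unfold_locales (rule admissible_rotE)
  have r0: "?r t = 0" using lt by (simp add: rot_def)
  have F_sink: "(0, c) \<notin> ?F" for c using sink_rotE[OF lt(1) sink] r0 by metis
  have F_long: "has_long_edge n ?F" using True by (rule has_long_edge_rotE)
  have r_pq: "?r p \<noteq> 0" "?r q \<noteq> 0" "?r p \<noteq> ?r q" "?r p < n" "?r q < n"
    using lt neq r0 rot_eq_iff[of _ n] rot_lt by metis+
  have F_nonadj: "nonadj ?F 0 (?r p)" "nonadj ?F 0 (?r q)" "nonadj ?F (?r p) (?r q)"
    using nonadj nonadj_rotE_iff lt r0 by metis+
  consider "?r p < ?r q" | "?r q < ?r p" using r_pq(3) by linarith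
  then have "improvable n ?F"
  proof cases
    case 1
    then show ?thesis using F.improvable_if_long_edge_sink_at_0 r_pq F_nonadj F_sink F_long by blast
  next
    case 2
    then show ?thesis
      using F.improvable_if_long_edge_sink_at_0 r_pq F_nonadj F_sink F_long nonadj_sym by blast
  qed
  then show ?thesis using improvable_if_rotE_improvable edges_subset by blast
qed

end

section \<open>Two nonadjacent vertices\<close>

locale separated_pair = circ_digraph +
  fixes Y :: nat
  assumes Y_pos: "0 < Y" and Y_lt: "Y < n" and nonadj_0_Y: "nonadj E 0 Y"
begin

abbreviation outdeg :: "nat \<Rightarrow> nat" where
  "outdeg v \<equiv> card {c. (v, c) \<in> E}"

abbreviation indeg :: "nat \<Rightarrow> nat" where
  "indeg v \<equiv> card {a. (a, v) \<in> E}"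

definition detached :: "nat \<Rightarrow> bool" where
  "detached s \<longleftrightarrow> 0 < s \<and> s < Y \<and> nonadj E 0 s \<and> nonadj E s Y"

lemma no_edge_to_0:
  assumes "0 < v" "v \<le> Y"
  shows "(v, 0) \<notin> E"
proof
  assume e: "(v, 0) \<in> E"
  show False
  proof (cases "v = Y")
    case False
    then have "(Y, 0) \<in> E" using edge_between_wrap[OF e, of Y] assms Y_lt by simp
    then show False using nonadj_0_Y by (simp add: nonadj_def)
  qed (use e nonadj_0_Y in \<open>simp add: nonadj_def\<close>)
qed

lemma no_edge_from_Y:
  assumes "u < Y"
  shows "(Y, u) \<notin> E"
proof
  assume e: "(Y, u) \<in> E"
  show False
  proof (cases "u = 0")
    case False
    then have "(Y, 0) \<in> E" using edge_between_wrap[OF e, of 0] assms Y_lt by simp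
    then show False using nonadj_0_Y by (simp add: nonadj_def)
  qed (use e nonadj_0_Y in \<open>simp add: nonadj_def\<close>)
qed

lemma out_edge_forward:
  assumes "0 < v" "v \<le> Y" "(v, c) \<in> E"
  shows "v < c"
proof (rule ccontr)
  assume "\<not> v < c"
  moreover have "c \<noteq> v" using assms(3) no_loop by metis
  moreover have "c \<noteq> 0" using assms(3) no_edge_to_0[OF assms(1,2)] by metis
  ultimately have "(v, 0) \<in> E"
    using edge_between_wrap[OF assms(3), of 0] edge_lt[OF assms(3)] by simp
  then show False using no_edge_to_0[OF assms(1,2)] by blast
qed

lemma in_edge_outside:
  assumes "u < Y" "(a, u) \<in> E"
  shows "a < u \<or> Y < a"
proof (rule ccontr)
  assume "\<not> (a < u \<or> Y < a)"
  moreover have "a \<noteq> u" using assms(2) no_loop by metis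
  moreover have "a \<noteq> Y" using assms(2) no_edge_from_Y[OF assms(1)] by blast
  ultimately have "(Y, u) \<in> E" using edge_between_wrap[OF assms(2), of Y] Y_lt by simp
  then show False using no_edge_from_Y[OF assms(1)] by blast
qed

lemma detached_out:
  assumes "detached s" "(s, c) \<in> E"
  shows "s < c \<and> c < Y"
proof -
  have "s < c" using out_edge_forward assms by (simp add: detached_def)
  moreover have "c \<noteq> Y" using assms by (auto simp: detached_def nonadj_def)
  moreover have "\<not> Y < c"
  proof
    assume "Y < c"
    then have "(s, Y) \<in> E" using edge_between_forward[OF assms(2), of Y] assms(1)
      by (simp add: detached_def)
    then show False using assms(1) by (simp add: detached_def nonadj_def)
  qed
  ultimately show ?thesis by simp
qed

lemma detached_in:
  assumes "detached s" "(a, s) \<in> E"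
  shows "0 < a \<and> a < s"
proof -
  have a0: "a \<noteq> 0" using assms unfolding detached_def nonadj_def by metis
  have "\<not> Y < a"
  proof
    assume "Y < a"
    then have "(0, s) \<in> E" using edge_between_wrap[OF assms(2), of 0] assms(1) Y_lt
      by (simp add: detached_def)
    then show False using assms(1) by (simp add: detached_def nonadj_def)
  qed
  then show ?thesis using in_edge_outside[OF _ assms(2)] assms(1) a0 by (simp add: detached_def)
qed

lemma detached_iff_edges:
  assumes "0 < w" "w < Y"
  shows "detached w \<longleftrightarrow> (0, w) \<notin> E \<and> (w, Y) \<notin> E"
  using assms no_edge_to_0[of w] no_edge_from_Y[of w] by (auto simp: detached_def nonadj_def)

lemma detached_between:
  assumes "detached a" "detached b" "a < c" "c < b"
  shows "detached c"
proof -
  have "(0, c) \<notin> E"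
  proof
    assume e: "(0, c) \<in> E"
    then have "(0, a) \<in> E" using edge_between_forward[OF e, of a] assms(1,3)
      by (simp add: detached_def)
    then show False using assms(1) by (simp add: detached_def nonadj_def)
  qed
  moreover have "(c, Y) \<notin> E"
  proof
    assume e: "(c, Y) \<in> E"
    then have "(b, Y) \<in> E" using edge_between_forward[OF e, of b] assms(2,4)
      by (simp add: detached_def)
    then show False using assms(2) by (simp add: detached_def nonadj_def)
  qed
  moreover have "0 < c" "c < Y" using assms by (auto simp: detached_def)
  ultimately show ?thesis by (simp add: detached_iff_edges)
qed

definition nxt :: "nat \<Rightarrow> nat" where
  "nxt s = (LEAST c. s < c \<and> (s, c) \<notin> E)"

definition prv :: "nat \<Rightarrow> nat" where
  "prv s = (GREATEST a. a < s \<and> (a, s) \<notin> E)"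

text \<open>As \<open>s\<close> reaches every vertex strictly between \<open>s\<close> and \<open>nxt s\<close>, adding the edge from \<open>s\<close> to
  \<open>nxt s\<close> preserves the interval property exactly when \<open>out_addable s\<close>; dually for \<open>in_addable\<close>.\<close>

definition out_addable :: "nat \<Rightarrow> bool" where
  "out_addable s \<longleftrightarrow> (\<forall>w. s < w \<and> w < nxt s \<longrightarrow> (w, nxt s) \<in> E)"

definition in_addable :: "nat \<Rightarrow> bool" where
  "in_addable s \<longleftrightarrow> (\<forall>w. prv s < w \<and> w < s \<longrightarrow> (prv s, w) \<in> E)"

lemma nxt:
  assumes "detached s"
  shows "s < nxt s" "nxt s \<le> Y" "(s, nxt s) \<notin> E"
    and "\<And>c. s < c \<Longrightarrow> c < nxt s \<Longrightarrow> (s, c) \<in> E"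
    and "\<And>c. s < c \<Longrightarrow> (s, c) \<notin> E \<Longrightarrow> nxt s \<le> c"
proof -
  have Y: "s < Y \<and> (s, Y) \<notin> E" using assms by (simp add: detached_def nonadj_def)
  show "s < nxt s" "(s, nxt s) \<notin> E"
    using LeastI[of "\<lambda>c. s < c \<and> (s, c) \<notin> E", OF Y] by (simp_all add: nxt_def)
  show "nxt s \<le> Y" unfolding nxt_def using Y by (rule Least_le)
  show "\<And>c. s < c \<Longrightarrow> (s, c) \<notin> E \<Longrightarrow> nxt s \<le> c" unfolding nxt_def by (rule Least_le) simp
  then show "\<And>c. s < c \<Longrightarrow> c < nxt s \<Longrightarrow> (s, c) \<in> E" by (meson leD)
qed

lemma prv:
  assumes "detached s"
  shows "prv s < s" "(prv s, s) \<notin> E"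
    and "\<And>a. prv s < a \<Longrightarrow> a < s \<Longrightarrow> (a, s) \<in> E"
    and "\<And>a. a < s \<Longrightarrow> (a, s) \<notin> E \<Longrightarrow> a \<le> prv s"
proof -
  let ?P = "\<lambda>a. a < s \<and> (a, s) \<notin> E"
  have P0: "?P 0" using assms by (simp add: detached_def nonadj_def)
  have bound: "\<And>a. ?P a \<Longrightarrow> a \<le> s" by simp
  show "prv s < s" "(prv s, s) \<notin> E"
    using GreatestI_nat[of ?P 0 s, OF P0 bound] by (simp_all add: prv_def)
  show "\<And>a. a < s \<Longrightarrow> (a, s) \<notin> E \<Longrightarrow> a \<le> prv s"
    unfolding prv_def using Greatest_le_nat[of ?P _ s] bound by blast
  then show "\<And>a. prv s < a \<Longrightarrow> a < s \<Longrightarrow> (a, s) \<in> E" by (meson leD)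
qed

lemma max_detached_out_addable:
  assumes "detached q" "\<And>s. detached s \<Longrightarrow> s \<le> q"
  shows "out_addable q"
  unfolding out_addable_def
proof (intro allI impI)
  fix w assume w: "q < w \<and> w < nxt q"
  show "(w, nxt q) \<in> E"
  proof (rule ccontr)
    assume no_w: "(w, nxt q) \<notin> E"
    have q: "0 < q" "(0, q) \<notin> E" using assms(1) by (auto simp: detached_def nonadj_def)
    have "nxt q \<le> Y" using nxt(2)[OF assms(1)] .
    have "(0, w) \<notin> E"
    proof
      assume e: "(0, w) \<in> E"
      show False using edge_between_forward[OF e, of q] q w by simp
    qed
    moreover have "(w, Y) \<notin> E"
    proof
      assume e: "(w, Y) \<in> E"
      show False
      proof (cases "nxt q = Y")
        case False
        then show False using edge_between_forward[OF e, of "nxt q"] w no_w \<open>nxt q \<le> Y\<close> by simp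
      qed (use e no_w in simp)
    qed
    ultimately have "detached w"
      using q w \<open>nxt q \<le> Y\<close> by (simp add: detached_iff_edges)
    then show False using assms(2)[of w] w by simp
  qed
qed

lemma min_detached_in_addable:
  assumes "detached p" "\<And>s. detached s \<Longrightarrow> p \<le> s"
  shows "in_addable p"
  unfolding in_addable_def
proof (intro allI impI)
  fix w assume w: "prv p < w \<and> w < p"
  show "(prv p, w) \<in> E"
  proof (rule ccontr)
    assume no_w: "(prv p, w) \<notin> E"
    have p: "p < Y" "(p, Y) \<notin> E" using assms(1) by (auto simp: detached_def nonadj_def)
    have "(0, w) \<notin> E"
    proof
      assume e: "(0, w) \<in> E"
      show False
      proof (cases "prv p = 0")
        case False
        then show False using edge_between_forward[OF e, of "prv p"] w no_w by simp
      qed (use e no_w in simp)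
    qed
    moreover have "(w, Y) \<notin> E"
    proof
      assume e: "(w, Y) \<in> E"
      show False using edge_between_forward[OF e, of p] p w by simp
    qed
    ultimately have "detached w"
      using p w by (simp add: detached_iff_edges)
    then show False using assms(2)[of w] w by simp
  qed
qed

lemma out_Suc_subset:
  assumes "detached s" "detached (Suc s)" "\<not> out_addable s" "(Suc s, c) \<in> E"
  shows "(s, c) \<in> E"
proof (rule ccontr)
  assume "(s, c) \<notin> E"
  moreover have c: "Suc s < c" using detached_out[OF assms(2,4)] by simp
  ultimately have "nxt s \<le> c" using nxt(5)[OF assms(1)] by simp
  obtain w where w: "s < w" "w < nxt s" "(w, nxt s) \<notin> E"
    using assms(3) by (auto simp: out_addable_def)
  have "(w, c) \<in> E"
  proof (cases "w = Suc s")
    case False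
    then show ?thesis using edge_between_forward[OF assms(4), of w] w \<open>nxt s \<le> c\<close> by simp
  qed (use assms(4) in simp)
  moreover have "nxt s \<noteq> c" using w \<open>(w, c) \<in> E\<close> by auto
  ultimately show False
    using edge_between_forward[of w c "nxt s"] w \<open>nxt s \<le> c\<close> by simp
qed

lemma in_Suc_subset:
  assumes "detached s" "detached (Suc s)" "\<not> in_addable (Suc s)" "(a, s) \<in> E"
  shows "(a, Suc s) \<in> E"
proof (rule ccontr)
  assume "(a, Suc s) \<notin> E"
  moreover have a: "a < s" using detached_in[OF assms(1,4)] by simp
  ultimately have "a \<le> prv (Suc s)" using prv(4)[OF assms(2)] by simp
  obtain w where w: "prv (Suc s) < w" "w < Suc s" "(prv (Suc s), w) \<notin> E"
    using assms(3) by (auto simp: in_addable_def)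
  have "(prv (Suc s), s) \<in> E"
  proof (cases "prv (Suc s) = a")
    case False
    then show ?thesis
      using edge_between_forward[OF assms(4), of "prv (Suc s)"] w \<open>a \<le> prv (Suc s)\<close> by simp
  qed (use assms(4) in simp)
  moreover have "w \<noteq> s" using w \<open>(prv (Suc s), s) \<in> E\<close> by auto
  ultimately show False
    using edge_between_forward[of "prv (Suc s)" s w] w by simp
qed

lemma out_antimono:
  assumes "t' \<le> t" "\<And>s. t' \<le> s \<Longrightarrow> s \<le> t \<Longrightarrow> detached s"
    and "\<And>s. t' \<le> s \<Longrightarrow> s < t \<Longrightarrow> \<not> out_addable s" "(t, c) \<in> E"
  shows "(t', c) \<in> E"
  using assms(1)
proof (induction t' rule: inc_induct)
  case (step s)
  then show ?case using out_Suc_subset assms(2,3) by simp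
qed (rule assms(4))

lemma in_mono:
  assumes "t' \<le> t" "\<And>s. t' \<le> s \<Longrightarrow> s \<le> t \<Longrightarrow> detached s"
    and "\<And>s. t' < s \<Longrightarrow> s \<le> t \<Longrightarrow> \<not> in_addable s" "(a, t') \<in> E"
  shows "(a, t) \<in> E"
  using assms(1)
proof (induction t rule: dec_induct)
  case (step s)
  then show ?case using in_Suc_subset assms(2,3) by simp
qed (rule assms(4))

lemma nxt_out_edge:
  assumes "detached t" "(nxt t, c) \<in> E"
  shows "nxt t < c"
  using out_edge_forward[OF _ nxt(2)[OF assms(1)] assms(2)] nxt(1)[OF assms(1)] by simp

lemma admissible_insert_nxt:
  assumes "detached t" "out_addable t"
  shows "admissible n (insert (t, nxt t) E)"
proof (rule admissible_insert_edge)
  show "t < n" "nxt t < n" "t \<noteq> nxt t" "(nxt t, t) \<notin> E"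
    using nxt[OF assms(1)] nxt_out_edge[OF assms(1)] Y_lt by fastforce+
  fix w assume "cw n t w (nxt t)"
  then have "t < w" "w < nxt t" using nxt(1)[OF assms(1)] by (auto simp: cw_iff)
  then show "(t, w) \<in> E \<and> (w, nxt t) \<in> E"
    using nxt(4)[OF assms(1)] assms(2) by (simp add: out_addable_def)
qed

lemma P3t_insert_nxt:
  assumes t: "detached t"
  defines "v \<equiv> nxt t"
  shows "P3t n E + outdeg v + indeg t \<le> P3t n (insert (t, v) E) + outdeg t"
proof -
  have tv: "t < v" "v < n" "(t, v) \<notin> E" using nxt[OF t] Y_lt by (simp_all add: v_def)
  have v_out: "v < c" if "(v, c) \<in> E" for c using nxt_out_edge[OF t] that by (simp add: v_def)
  have out_eq: "{c. (v, c) \<in> E \<and> nonadj E t c} = {c. (v, c) \<in> E}"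
  proof -
    have "(t, c) \<notin> E" if "(v, c) \<in> E" for c
      using edge_between_forward[of t c v] tv v_out[OF that] by auto
    moreover have "(c, t) \<notin> E" if "(v, c) \<in> E" for c
      using detached_in[OF t] v_out[OF that] tv(1) by fastforce
    ultimately show ?thesis by (auto simp: nonadj_def)
  qed
  have in_eq: "{a. (a, t) \<in> E \<and> nonadj E a v} = {a. (a, t) \<in> E}"
  proof -
    have "(a, v) \<notin> E" if "(a, t) \<in> E" for a
      using edge_between_forward[of a v t] tv detached_in[OF t that] by auto
    moreover have "(v, a) \<notin> E" if "(a, t) \<in> E" for a
      using v_out detached_in[OF t that] tv(1) by fastforce
    ultimately show ?thesis by (auto simp: nonadj_def)
  qed
  have no_back: "{b. (v, b) \<in> E \<and> (b, t) \<in> E} = {}"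
    using v_out detached_in[OF t] tv(1) by fastforce
  have "P3t n E + outdeg v + indeg t
      \<le> P3t n (insert (t, v) E) + card {b. (t, b) \<in> E \<and> (b, v) \<in> E}"
    using P3t_insert_edge[of t v, unfolded out_eq in_eq no_back] tv v_out by fastforce
  moreover have "card {b. (t, b) \<in> E \<and> (b, v) \<in> E} \<le> outdeg t"
    by (intro card_mono finite_out) blast
  ultimately show ?thesis by linarith
qed

lemma admissible_insert_prv:
  assumes "detached s" "in_addable s"
  shows "admissible n (insert (prv s, s) E)"
proof (rule admissible_insert_edge)
  show "prv s < n" "s < n" "prv s \<noteq> s" "(s, prv s) \<notin> E"
    using prv[OF assms(1)] detached_out[OF assms(1)] assms(1) Y_lt
    by (fastforce simp: detached_def)+
  fix w assume "cw n (prv s) w s"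
  then have "prv s < w" "w < s" using prv(1)[OF assms(1)] by (auto simp: cw_iff)
  then show "(prv s, w) \<in> E \<and> (w, s) \<in> E"
    using prv(3)[OF assms(1)] assms(2) by (simp add: in_addable_def)
qed

lemma P3t_insert_prv:
  assumes s: "detached s"
  defines "u \<equiv> prv s"
  shows "P3t n E + indeg u + outdeg s \<le> P3t n (insert (u, s) E) + indeg s"
proof -
  have us: "u < s" "(u, s) \<notin> E" using prv[OF s] by (simp_all add: u_def)
  have sY: "s < Y" using s by (simp add: detached_def)
  have out_eq: "{c. (s, c) \<in> E \<and> nonadj E u c} = {c. (s, c) \<in> E}"
  proof -
    have "(u, c) \<notin> E" if "(s, c) \<in> E" for c
      using edge_between_forward[of u c s] us detached_out[OF s that] by auto
    moreover have "(c, u) \<notin> E" if "(s, c) \<in> E" for c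
      using in_edge_outside[of u c] us(1) sY detached_out[OF s that] by fastforce
    ultimately show ?thesis by (auto simp: nonadj_def)
  qed
  have in_eq: "{a. (a, u) \<in> E \<and> nonadj E a s} = {a. (a, u) \<in> E}"
  proof -
    have "(a, s) \<notin> E" if "(a, u) \<in> E" for a
      using edge_between_forward[of a s u] us detached_in[OF s] in_edge_outside[OF _ that] sY
      by fastforce
    moreover have "(s, a) \<notin> E" if "(a, u) \<in> E" for a
      using detached_out[OF s] in_edge_outside[OF _ that] us(1) sY by fastforce
    ultimately show ?thesis by (auto simp: nonadj_def)
  qed
  have no_back: "{b. (s, b) \<in> E \<and> (b, u) \<in> E} = {}"
    using detached_out[OF s] in_edge_outside[of u] us(1) sY by fastforce
  have "P3t n E + indeg u + outdeg s
      \<le> P3t n (insert (u, s) E) + card {b. (u, b) \<in> E \<and> (b, s) \<in> E}"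
    using P3t_insert_edge[of u s, unfolded out_eq in_eq no_back] us detached_out[OF s] sY Y_lt
    by fastforce
  moreover have "card {b. (u, b) \<in> E \<and> (b, s) \<in> E} \<le> indeg s"
    by (intro card_mono finite_in) blast
  ultimately show ?thesis by linarith
qed

lemma nxt_sink_after_window:
  assumes "\<not> improvable n E" "t' \<le> t"
    and detached: "\<And>s. t' \<le> s \<Longrightarrow> s \<le> t \<Longrightarrow> detached s"
    and addable: "out_addable t" "in_addable t'"
    and not_out: "\<And>s. t' \<le> s \<Longrightarrow> s < t \<Longrightarrow> \<not> out_addable s"
    and not_in: "\<And>s. t' < s \<Longrightarrow> s \<le> t \<Longrightarrow> \<not> in_addable s"
  shows "outdeg (nxt t) = 0"
proof -
  have t: "detached t" "detached t'" using detached assms(2) by simp_all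
  have no_gain: "P3t n E' \<le> P3t n E" if "admissible n E'" for E'
    using assms(1) that by (auto simp: improvable_def not_less)
  have "outdeg t \<le> outdeg t'"
    using out_antimono[OF assms(2) detached not_out] by (intro card_mono finite_out) blast
  moreover have "indeg t' \<le> indeg t"
    using in_mono[OF assms(2) detached not_in] by (intro card_mono finite_in) blast
  moreover have "P3t n E + outdeg (nxt t) + indeg t \<le> P3t n E + outdeg t"
    using P3t_insert_nxt[OF t(1)] no_gain[OF admissible_insert_nxt[OF t(1) addable(1)]]
    by linarith
  moreover have "P3t n E + indeg (prv t') + outdeg t' \<le> P3t n E + indeg t'"
    using P3t_insert_prv[OF t(2)] no_gain[OF admissible_insert_prv[OF t(2) addable(2)]]
    by linarith
  ultimately show ?thesis by linarith
qed

lemma nxt_sink_detached_or_Y: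
  assumes "detached t" "outdeg (nxt t) = 0"
  shows "detached (nxt t) \<or> nxt t = Y"
proof (rule disjCI)
  assume "nxt t \<noteq> Y"
  then have v: "t < nxt t" "nxt t < Y" using nxt[OF assms(1)] by simp_all
  have t: "0 < t" "(0, t) \<notin> E" using assms(1) by (simp_all add: detached_def nonadj_def)
  have "(0, nxt t) \<notin> E"
  proof
    assume e: "(0, nxt t) \<in> E"
    show False using edge_between_forward[OF e, of t] t v by simp
  qed
  moreover have "(nxt t, Y) \<notin> E" using assms(2) finite_out by auto
  ultimately show "detached (nxt t)" using t v by (simp add: detached_iff_edges)
qed

lemma improvable_or_detached_sink:
  assumes "detached x"
  shows "improvable n E \<or> (\<exists>v. (detached v \<or> v = Y) \<and> (\<forall>c. (v, c) \<notin> E))"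
proof (cases "improvable n E")
  case unimprovable: False
  have fin: "finite {s. detached s}"
    by (rule finite_subset[of _ "{..<Y}"]) (auto simp: detached_def)
  define p where "p = Min {s. detached s}"
  define q where "q = Max {s. detached s}"
  have p: "detached p" "\<And>s. detached s \<Longrightarrow> p \<le> s"
    using fin assms Min_in[OF fin] by (auto simp: p_def)
  have q: "detached q" "\<And>s. detached s \<Longrightarrow> s \<le> q"
    using fin assms Max_in[OF fin] by (auto simp: q_def)
  define t where "t = (LEAST s. detached s \<and> out_addable s)"
  have t: "detached t" "out_addable t"
    using LeastI[of "\<lambda>s. detached s \<and> out_addable s" q] q max_detached_out_addable
    by (simp_all add: t_def)
  have t_least: "\<not> out_addable s" if "detached s" "s < t" for s
    using not_less_Least[of s "\<lambda>s. detached s \<and> out_addable s"] that by (simp add: t_def)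
  define t' where "t' = (GREATEST s. detached s \<and> s \<le> t \<and> in_addable s)"
  have p_cand: "detached p \<and> p \<le> t \<and> in_addable p"
    using p t(1) min_detached_in_addable by blast
  have t': "detached t'" "t' \<le> t" "in_addable t'"
    using GreatestI_nat[of "\<lambda>s. detached s \<and> s \<le> t \<and> in_addable s" p t] p_cand
    by (simp_all add: t'_def)
  have t'_greatest: "\<not> in_addable s" if "detached s" "t' < s" "s \<le> t" for s
    using Greatest_le_nat[of "\<lambda>s. detached s \<and> s \<le> t \<and> in_addable s" s t] that
    by (auto simp: t'_def)
  have window: "detached s" if "t' \<le> s" "s \<le> t" for s
    using detached_between[OF t'(1) t(1)] t t' that by (cases "s = t' \<or> s = t") auto
  have "outdeg (nxt t) = 0"
    using nxt_sink_after_window[OF unimprovable t'(2) window t(2) t'(3)] window t_least t'_greatest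
    by simp
  then show ?thesis
    using nxt_sink_detached_or_Y[OF t(1)] finite_out by auto
qed simp

end

context circ_digraph
begin

lemma improvable_if_stable_triple_at_0:
  assumes n: "4 \<le> n" and xy: "0 < x" "x < y" "y < n"
    and nonadj: "nonadj E 0 x" "nonadj E 0 y" "nonadj E x y"
  shows "improvable n E"
proof -
  interpret separated_pair n E y
    using xy nonadj(2) by unfold_locales simp_all
  have "detached x" using xy nonadj(1,3) by (simp add: detached_def)
  then consider "improvable n E" | v where "detached v \<or> v = y" "\<And>c. (v, c) \<notin> E"
    using improvable_or_detached_sink by blast
  then show ?thesis
  proof cases
    case (2 v)
    show ?thesis
    proof (cases "v = y")
      case True
      then show ?thesis
        using improvable_if_sink_in_stable_triple[OF n, of y 0 x] 2 xy nonadj nonadj_sym by simp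
    next
      case False
      then have "detached v" using 2 by simp
      then show ?thesis
        using improvable_if_sink_in_stable_triple[OF n, of v 0 y] 2 xy nonadj nonadj_sym
        by (simp add: detached_def)
    qed
  qed
qed

lemma improvable_if_stable_triple:
  assumes n: "4 \<le> n" and abc: "a < b" "b < c" "c < n"
    and nonadj: "nonadj E a b" "nonadj E a c" "nonadj E b c"
  shows "improvable n E"
proof -
  let ?r = "rot n (n - a)" and ?F = "rotE n (n - a) E"
  interpret F: circ_digraph n ?F by unfold_locales (rule admissible_rotE)
  have r: "?r z = z - a" if "a \<le> z" "z < n" for z
  proof -
    have "?r z = (z + (n - a)) mod n" by (simp only: rot_def)
    also have "z + (n - a) = (z - a) + n" using that by simp
    also have "((z - a) + n) mod n = z - a" by (subst mod_add_self2) (use that in simp)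
    finally show ?thesis .
  qed
  have "improvable n ?F"
  proof (rule F.improvable_if_stable_triple_at_0[OF n, of "b - a" "c - a"])
    show "0 < b - a" "b - a < c - a" "c - a < n" using abc by simp_all
    have ra: "?r a = 0" and rb: "?r b = b - a" and rc: "?r c = c - a"
      using r abc by simp_all
    show "nonadj ?F 0 (b - a)" "nonadj ?F 0 (c - a)" "nonadj ?F (b - a) (c - a)"
      using nonadj_rotE_iff[of a b "n - a"] nonadj_rotE_iff[of a c "n - a"]
        nonadj_rotE_iff[of b c "n - a"] nonadj abc
      unfolding ra rb rc by simp_all
  qed
  then show ?thesis using improvable_if_rotE_improvable edges_subset by blast
qed

end

theorem mainTheorem10:
  fixes n :: nat and E :: "(nat \<times> nat) set" and X :: "nat set"
  assumes "n \<ge> 4" and "optimal n E" and "X \<subseteq> {0..<n}" and "stable E X"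
  shows "card X < 3"
proof (rule ccontr)
  assume "\<not> card X < 3"
  then have "3 \<le> card X" by simp
  then obtain a b c where abc: "a < b" "b < c" "a \<in> X" "b \<in> X" "c \<in> X"
    by (rule three_increasing_elements)
  interpret circ_digraph n E
    using assms(2) by unfold_locales (simp add: optimal_def)
  have nonadj: "nonadj E u v" if "u \<in> X" "v \<in> X" for u v
    using assms(4) that by (simp add: stable_def nonadj_def)
  have "c < n" using abc(5) assms(3) by auto
  then have "improvable n E"
    using improvable_if_stable_triple[OF assms(1) abc(1,2)]
      nonadj[OF abc(3,4)] nonadj[OF abc(3,5)] nonadj[OF abc(4,5)] by simp
  then show False
    using assms(2) optimal_not_improvable by blast
qed

end
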